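(* Let $\varphi$ be a continuous Archimedean t-norm, $A^{+}=(a^{+}_{ij}),A^{-}=(a^{-}_{ij})\in[0,1]^{m\times n}$, $b\in[0,1]^m$, and let $I_j$, $S'_{ij}$ be as in the context. Let $i\in\{1,\dots,m\}$, $j\in\{1,\dots,n\}$ with $S'_{ij}\neq\varnothing$. Then $I_j$ is a nonempty closed interval $[L_j,U_j]$ and $S'_{ij}$ is one of the sets $\{L_j\}$, $\{U_j\}$, $\{L_j,U_j\}$, $[L_j,U_j]$.
   Context: A t-norm is a binary operation on $[0,1]$ that is commutative, associative, nondecreasing in each argument and has $1$ as neutral element; a continuous t-norm $\varphi$ is Archimedean if $\varphi(x,x)<x$ for all $x\in(0,1)$. For $i\in\mathscr{I}=\{1,\dots,m\}$, $j\in\mathscr{J}=\{1,\dots,n\}$: $S_{ij}=\{t\in[0,1]:\max\{\varphi(a^{+}_{ij},t),\varphi(a^{-}_{ij},1-t)\}=b_i\}$, $I_{ij}=\{t\in[0,1]:\max\{\varphi(a^{+}_{ij},t),\varphi(a^{-}_{ij},1-t)\}\le b_i\}$, $I_j=\bigcap_{i\in\mathscr{I}}I_{ij}$, and $S'_{ij}=S_{ij}\cap I_j$. *)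

theory Defs
  imports "HOL-Analysis.Analysis"
begin

text \<open>A t-norm on the unit interval [0,1], with the operation modelled as a real function
  whose behaviour is only constrained on [0,1].\<close>
definition tnorm :: "(real \<Rightarrow> real \<Rightarrow> real) \<Rightarrow> bool" where
  "tnorm T \<longleftrightarrow>
     (\<forall>x\<in>{0..1}. \<forall>y\<in>{0..1}. T x y \<in> {0..1}) \<and>
     (\<forall>x\<in>{0..1}. \<forall>y\<in>{0..1}. T x y = T y x) \<and>
     (\<forall>x\<in>{0..1}. \<forall>y\<in>{0..1}. \<forall>z\<in>{0..1}. T x (T y z) = T (T x y) z) \<and>
     (\<forall>x\<in>{0..1}. \<forall>y\<in>{0..1}. \<forall>z\<in>{0..1}. y \<le> z \<longrightarrow> T x y \<le> T x z) \<and>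
     (\<forall>x\<in>{0..1}. T x 1 = x)"

definition continuous_archimedean_tnorm :: "(real \<Rightarrow> real \<Rightarrow> real) \<Rightarrow> bool" where
  "continuous_archimedean_tnorm T \<longleftrightarrow>
     tnorm T \<and>
     continuous_on ({0..1} \<times> {0..1}) (\<lambda>p. T (fst p) (snd p)) \<and>
     (\<forall>x\<in>{0<..<1}. T x x < x)"

text \<open>Indices i range over {1..m}, j over {1..n}.\<close>
definition S_set :: "(real \<Rightarrow> real \<Rightarrow> real) \<Rightarrow> (nat \<Rightarrow> nat \<Rightarrow> real) \<Rightarrow> (nat \<Rightarrow> nat \<Rightarrow> real)
    \<Rightarrow> (nat \<Rightarrow> real) \<Rightarrow> nat \<Rightarrow> nat \<Rightarrow> real set" where
  "S_set T Ap Am b i j = {t\<in>{0..1}. max (T (Ap i j) t) (T (Am i j) (1 - t)) = b i}"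

definition I_set :: "(real \<Rightarrow> real \<Rightarrow> real) \<Rightarrow> (nat \<Rightarrow> nat \<Rightarrow> real) \<Rightarrow> (nat \<Rightarrow> nat \<Rightarrow> real)
    \<Rightarrow> (nat \<Rightarrow> real) \<Rightarrow> nat \<Rightarrow> nat \<Rightarrow> real set" where
  "I_set T Ap Am b i j = {t\<in>{0..1}. max (T (Ap i j) t) (T (Am i j) (1 - t)) \<le> b i}"

definition Ij_set :: "(real \<Rightarrow> real \<Rightarrow> real) \<Rightarrow> (nat \<Rightarrow> nat \<Rightarrow> real) \<Rightarrow> (nat \<Rightarrow> nat \<Rightarrow> real)
    \<Rightarrow> (nat \<Rightarrow> real) \<Rightarrow> nat \<Rightarrow> nat \<Rightarrow> real set" where
  "Ij_set T Ap Am b m j = (\<Inter>i\<in>{1..m}. I_set T Ap Am b i j)"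

definition S'_set :: "(real \<Rightarrow> real \<Rightarrow> real) \<Rightarrow> (nat \<Rightarrow> nat \<Rightarrow> real) \<Rightarrow> (nat \<Rightarrow> nat \<Rightarrow> real)
    \<Rightarrow> (nat \<Rightarrow> real) \<Rightarrow> nat \<Rightarrow> nat \<Rightarrow> nat \<Rightarrow> real set" where
  "S'_set T Ap Am b m i j = S_set T Ap Am b i j \<inter> Ij_set T Ap Am b m j"

end

theory Submission
  imports Defs
begin

text \<open>Each constraint \<open>max (T a t) (T a' (1 - t)) \<le> c\<close> combines a nondecreasing and a
  nonincreasing continuous function of \<open>t\<close>, so its solution set is a closed interval, and so
  is the intersection \<open>I\<^sub>j\<close>. For a continuous Archimedean t-norm, \<open>T a\<close> is strictly increasing
  wherever it is positive: from \<open>T a s = T a t\<close> with \<open>s < t\<close> choosing \<open>z\<close> with \<open>T t z = s\<close> (IVT) gives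
  \<open>T c z = c\<close> for \<open>c = T a s\<close> and \<open>z < 1\<close>; the least \<open>z0\<close> with \<open>T c z0 = c\<close> satisfies \<open>z0 \<le> T z0 z0\<close>, which the
  Archimedean property only allows for \<open>z0 = 0\<close>, and then \<open>c = T c 0 = 0\<close>. Hence for \<open>b\<^sub>i > 0\<close>
  the constraint \<open>i\<close> can only be tight at an endpoint of \<open>I\<^sub>j\<close>, while for \<open>b\<^sub>i = 0\<close> it is
  tight on all of \<open>I\<^sub>j\<close>.\<close>

lemma tnorm_range: "tnorm T \<Longrightarrow> x \<in> {0..1} \<Longrightarrow> y \<in> {0..1} \<Longrightarrow> T x y \<in> {0..1}"
  unfolding tnorm_def by blast

lemma tnorm_commute: "tnorm T \<Longrightarrow> x \<in> {0..1} \<Longrightarrow> y \<in> {0..1} \<Longrightarrow> T x y = T y x"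
  unfolding tnorm_def by blast

lemma tnorm_assoc:
  "tnorm T \<Longrightarrow> x \<in> {0..1} \<Longrightarrow> y \<in> {0..1} \<Longrightarrow> z \<in> {0..1} \<Longrightarrow> T x (T y z) = T (T x y) z"
  unfolding tnorm_def by blast

lemma tnorm_mono:
  "tnorm T \<Longrightarrow> x \<in> {0..1} \<Longrightarrow> y \<in> {0..1} \<Longrightarrow> z \<in> {0..1} \<Longrightarrow> y \<le> z \<Longrightarrow> T x y \<le> T x z"
  unfolding tnorm_def by blast

lemma tnorm_one_right: "tnorm T \<Longrightarrow> x \<in> {0..1} \<Longrightarrow> T x 1 = x"
  unfolding tnorm_def by blast

lemma tnorm_zero_left:
  assumes "tnorm T" "x \<in> {0..1}"
  shows "T 0 x = 0"
  using tnorm_mono[OF assms(1), of 0 x 1] tnorm_one_right[OF assms(1), of 0]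
    tnorm_range[OF assms(1), of 0 x] assms(2) by auto

lemma tnorm_zero_right: "tnorm T \<Longrightarrow> x \<in> {0..1} \<Longrightarrow> T x 0 = 0"
  using tnorm_zero_left tnorm_commute[of T x 0] by auto

lemma continuous_archimedean_tnormD:
  assumes "continuous_archimedean_tnorm T"
  shows "tnorm T" and "continuous_on ({0..1} \<times> {0..1}) (\<lambda>p. T (fst p) (snd p))"
    and "x \<in> {0<..<1} \<Longrightarrow> T x x < x"
  using assms unfolding continuous_archimedean_tnorm_def by blast+

lemma continuous_on_tnorm_right:
  fixes T :: "real \<Rightarrow> real \<Rightarrow> real"
  assumes "continuous_on ({0..1} \<times> {0..1}) (\<lambda>p. T (fst p) (snd p))" "c \<in> {0..1}"
  shows "continuous_on {0..1} (T c)"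
proof -
  have "continuous_on {0..1::real} (\<lambda>z. (\<lambda>p. T (fst p) (snd p)) (c, z))"
    by (rule continuous_on_compose2[OF assms(1)]) (use assms(2) in \<open>auto intro!: continuous_intros\<close>)
  then show ?thesis by simp
qed

lemma archimedean_tnorm_fixed_point_zero:
  assumes CA: "continuous_archimedean_tnorm T"
    and c: "c \<in> {0..1}" and z: "z \<in> {0..1}" "z < 1" and fixed: "T c z = c"
  shows "c = 0"
proof -
  note tn = continuous_archimedean_tnormD(1)[OF CA]
  define Z where "Z = {x \<in> {0..1::real}. T c x = c}"
  have "closed Z"
    unfolding Z_def
    by (rule continuous_closed_preimage_constant)
      (auto intro: continuous_on_tnorm_right[OF continuous_archimedean_tnormD(2)[OF CA] c])
  moreover have "z \<in> Z" and bdd: "bdd_below Z"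
    using z fixed unfolding Z_def by auto
  ultimately have z0: "Inf Z \<in> Z" and "Inf Z \<le> z"
    using closed_contains_Inf cInf_lower by blast+
  define z0 where "z0 = Inf Z"
  have z0_01: "z0 \<in> {0..1}" and z0_fixed: "T c z0 = c"
    using z0 unfolding z0_def Z_def by auto
  have "T c (T z0 z0) = c"
    using tnorm_assoc[OF tn c z0_01 z0_01] z0_fixed by simp
  then have "T z0 z0 \<in> Z"
    using tnorm_range[OF tn z0_01 z0_01] unfolding Z_def by auto
  then have "z0 \<le> T z0 z0"
    unfolding z0_def using cInf_lower[OF _ bdd] by blast
  moreover have "z0 < 1"
    using \<open>Inf Z \<le> z\<close> z unfolding z0_def by linarith
  ultimately have "z0 = 0"
    using continuous_archimedean_tnormD(3)[OF CA, of z0] z0_01 by force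
  then show "c = 0"
    using z0_fixed tnorm_zero_right[OF tn c] by simp
qed

lemma archimedean_tnorm_eq_imp_zero:
  assumes CA: "continuous_archimedean_tnorm T"
    and a: "a \<in> {0..1}" and s: "s \<in> {0..1}" and t: "t \<in> {0..1}"
    and "s < t" and eq: "T a s = T a t"
  shows "T a s = 0"
proof -
  note tn = continuous_archimedean_tnormD(1)[OF CA]
  obtain z where z: "z \<in> {0..1}" "T t z = s"
    using IVT'[of "T t" 0 s 1] tnorm_zero_right[OF tn t] tnorm_one_right[OF tn t] s \<open>s < t\<close>
      continuous_on_tnorm_right[OF continuous_archimedean_tnormD(2)[OF CA] t] by auto
  have "z \<noteq> 1"
    using z tnorm_one_right[OF tn t] \<open>s < t\<close> by auto
  moreover have "T (T a s) z = T a s"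
    using tnorm_assoc[OF tn a t z(1)] z(2) eq by simp
  ultimately show ?thesis
    using archimedean_tnorm_fixed_point_zero[OF CA tnorm_range[OF tn a s] z(1)] z(1) by force
qed

lemma is_interval_I_set:
  assumes "tnorm T" "Ap i j \<in> {0..1}" "Am i j \<in> {0..1}"
  shows "is_interval (I_set T Ap Am b i j)"
  unfolding is_interval_1
proof (intro ballI allI impI)
  fix x z y
  assume x: "x \<in> I_set T Ap Am b i j" and z: "z \<in> I_set T Ap Am b i j" and "x \<le> y \<and> y \<le> z"
  then have "x \<in> {0..1}" "y \<in> {0..1}" "z \<in> {0..1}" "x \<le> y" "y \<le> z"
    unfolding I_set_def by auto
  then have "T (Ap i j) y \<le> T (Ap i j) z" "T (Am i j) (1 - y) \<le> T (Am i j) (1 - x)"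
    using tnorm_mono[OF assms(1) assms(2), of y z] tnorm_mono[OF assms(1) assms(3), of "1 - y" "1 - x"]
    by auto
  then show "y \<in> I_set T Ap Am b i j"
    using x z \<open>y \<in> {0..1}\<close> unfolding I_set_def by auto
qed

lemma closed_I_set:
  fixes T :: "real \<Rightarrow> real \<Rightarrow> real"
  assumes "continuous_on ({0..1} \<times> {0..1}) (\<lambda>p. T (fst p) (snd p))"
    and "Ap i j \<in> {0..1}" "Am i j \<in> {0..1}"
  shows "closed (I_set T Ap Am b i j)"
proof -
  have "continuous_on {0..1::real} (\<lambda>t. T (Am i j) (1 - t))"
    by (rule continuous_on_compose2[OF continuous_on_tnorm_right[OF assms(1,3)]])
      (auto intro!: continuous_intros)
  then have "continuous_on {0..1} (\<lambda>t. max (T (Ap i j) t) (T (Am i j) (1 - t)))"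
    using continuous_on_max continuous_on_tnorm_right[OF assms(1,2)] by blast
  then have "closed ({0..1} \<inter> (\<lambda>t. max (T (Ap i j) t) (T (Am i j) (1 - t))) -` {..b i})"
    by (rule continuous_closed_preimage) auto
  moreover have "I_set T Ap Am b i j = {0..1} \<inter> (\<lambda>t. max (T (Ap i j) t) (T (Am i j) (1 - t))) -` {..b i}"
    unfolding I_set_def by auto
  ultimately show ?thesis by simp
qed

lemma Ij_set_eq_atLeastAtMost:
  assumes CA: "continuous_archimedean_tnorm T"
    and A: "\<forall>k\<in>{1..m}. Ap k j \<in> {0..1} \<and> Am k j \<in> {0..1}"
    and "1 \<le> m" and ne: "Ij_set T Ap Am b m j \<noteq> {}"
  shows "\<exists>L U. L \<le> U \<and> Ij_set T Ap Am b m j = {L..U}"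
proof -
  let ?I = "Ij_set T Ap Am b m j"
  have "is_interval ?I"
    unfolding Ij_set_def is_interval_convex_1
    using is_interval_I_set[OF continuous_archimedean_tnormD(1)[OF CA]] A
    by (intro convex_INT) (simp add: is_interval_convex_1)
  moreover have "closed ?I"
    unfolding Ij_set_def
    using closed_I_set[OF continuous_archimedean_tnormD(2)[OF CA]] A by (intro closed_INT) auto
  moreover have "?I \<subseteq> {0..1}"
    using \<open>1 \<le> m\<close> unfolding Ij_set_def I_set_def by auto
  ultimately have "connected ?I \<and> compact ?I"
    by (metis bounded_closed_interval bounded_subset compact_eq_bounded_closed is_interval_connected_1)
  then obtain L U where "?I = {L..U}"
    using connected_compact_interval_1 by blast
  then show ?thesis
    using ne by auto
qed

lemma max_tnorm_eq_between_imp_zero: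
  assumes CA: "continuous_archimedean_tnorm T"
    and a: "a \<in> {0..1}" and a': "a' \<in> {0..1}" and LU: "L \<in> {0..1}" "U \<in> {0..1}" "L < t" "t < U"
    and L_le: "max (T a L) (T a' (1 - L)) \<le> c" and U_le: "max (T a U) (T a' (1 - U)) \<le> c"
    and t_eq: "max (T a t) (T a' (1 - t)) = c"
  shows "c = 0"
proof -
  note tn = continuous_archimedean_tnormD(1)[OF CA]
  have t: "t \<in> {0..1}" "1 - t \<in> {0..1}"
    using LU by auto
  consider "T a t = c" | "T a' (1 - t) = c"
    using t_eq by (auto simp: max_def split: if_splits)
  then show ?thesis
  proof cases
    case 1
    then have "T a t = T a U"
      using tnorm_mono[OF tn a t(1) LU(2)] LU U_le by fastforce
    then show ?thesis
      using archimedean_tnorm_eq_imp_zero[OF CA a t(1) LU(2) LU(4)] 1 by simp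
  next
    case 2
    have "1 - L \<in> {0..1}" "1 - t < 1 - L"
      using LU by auto
    then have "T a' (1 - t) = T a' (1 - L)"
      using tnorm_mono[OF tn a' t(2), of "1 - L"] 2 L_le by fastforce
    then show ?thesis
      using archimedean_tnorm_eq_imp_zero[OF CA a' t(2) \<open>1 - L \<in> {0..1}\<close> \<open>1 - t < 1 - L\<close>] 2 by simp
  qed
qed

lemma S'_set_subset_endpoints:
  assumes CA: "continuous_archimedean_tnorm T"
    and "Ap i j \<in> {0..1}" "Am i j \<in> {0..1}" "i \<in> {1..m}" "b i \<noteq> 0"
    and I: "Ij_set T Ap Am b m j = {L..U}"
  shows "S'_set T Ap Am b m i j \<subseteq> {L, U}"
proof
  fix t
  assume t: "t \<in> S'_set T Ap Am b m i j"
  have mem_I: "x \<in> {0..1}" "max (T (Ap i j) x) (T (Am i j) (1 - x)) \<le> b i"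
    if "L \<le> x" "x \<le> U" for x
  proof -
    have "x \<in> Ij_set T Ap Am b m j"
      using that I by simp
    then have "x \<in> I_set T Ap Am b i j"
      using \<open>i \<in> {1..m}\<close> unfolding Ij_set_def by blast
    then show "x \<in> {0..1}" "max (T (Ap i j) x) (T (Am i j) (1 - x)) \<le> b i"
      unfolding I_set_def by auto
  qed
  have "L \<le> t" "t \<le> U" and t_eq: "max (T (Ap i j) t) (T (Am i j) (1 - t)) = b i"
    using t I unfolding S'_set_def S_set_def by auto
  show "t \<in> {L, U}"
  proof (rule ccontr)
    assume "t \<notin> {L, U}"
    with \<open>L \<le> t\<close> \<open>t \<le> U\<close> have "L < t" "t < U" by auto
    then show False
      using max_tnorm_eq_between_imp_zero[OF CA assms(2,3) mem_I(1)[of L] mem_I(1)[of U]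
          \<open>L < t\<close> \<open>t < U\<close> mem_I(2)[of L] mem_I(2)[of U] t_eq] \<open>b i \<noteq> 0\<close>
      by simp
  qed
qed

lemma S'_set_eq_Ij_set_if_zero:
  assumes "tnorm T" "Ap i j \<in> {0..1}" "i \<in> {1..m}" "b i = 0"
  shows "S'_set T Ap Am b m i j = Ij_set T Ap Am b m j"
proof -
  have "t \<in> S_set T Ap Am b i j" if t: "t \<in> Ij_set T Ap Am b m j" for t
  proof -
    have "t \<in> I_set T Ap Am b i j"
      using t assms(3) unfolding Ij_set_def by blast
    then have "t \<in> {0..1}" "max (T (Ap i j) t) (T (Am i j) (1 - t)) \<le> 0"
      using assms(4) unfolding I_set_def by auto
    moreover have "0 \<le> T (Ap i j) t"
      using tnorm_range[OF assms(1,2) \<open>t \<in> {0..1}\<close>] by simp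
    ultimately show ?thesis
      using assms(4) unfolding S_set_def by auto
  qed
  then show ?thesis
    unfolding S'_set_def by blast
qed

theorem corollary4:
  fixes T :: "real \<Rightarrow> real \<Rightarrow> real"
    and Ap Am :: "nat \<Rightarrow> nat \<Rightarrow> real" and b :: "nat \<Rightarrow> real"
    and m n i j :: nat
  assumes "continuous_archimedean_tnorm T"
    and "\<forall>i\<in>{1..m}. \<forall>j\<in>{1..n}. Ap i j \<in> {0..1} \<and> Am i j \<in> {0..1}"
    and "\<forall>i\<in>{1..m}. b i \<in> {0..1}"
    and "i \<in> {1..m}" and "j \<in> {1..n}"
    and "S'_set T Ap Am b m i j \<noteq> {}"
  shows "\<exists>L U. L \<le> U \<and> Ij_set T Ap Am b m j = {L..U} \<and>
           (S'_set T Ap Am b m i j = {L} \<or> S'_set T Ap Am b m i j = {U} \<or>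
            S'_set T Ap Am b m i j = {L, U} \<or> S'_set T Ap Am b m i j = {L..U})"
proof -
  have A: "\<forall>k\<in>{1..m}. Ap k j \<in> {0..1} \<and> Am k j \<in> {0..1}"
    using assms(2,5) by blast
  have "Ij_set T Ap Am b m j \<noteq> {}"
    using assms(6) unfolding S'_set_def by blast
  then obtain L U where LU: "L \<le> U" "Ij_set T Ap Am b m j = {L..U}"
    using Ij_set_eq_atLeastAtMost[of T m Ap j Am b] assms(1,4) A by auto
  have "S'_set T Ap Am b m i j = {L..U} \<or> S'_set T Ap Am b m i j \<subseteq> {L, U}"
    using S'_set_eq_Ij_set_if_zero[OF continuous_archimedean_tnormD(1)[OF assms(1)]]
      S'_set_subset_endpoints[OF assms(1)] A assms(4) LU(2) by blast
  then show ?thesis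
    using LU assms(6) by blast
qed

end
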